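(* In the setting described in the context, if $\alpha'(0)=0$, then $\gamma$ is a circle centered at the origin.
   Context: Setting: $\mathbb{R}^2$ in polar coordinates $(r,\theta)$ with Riemannian metric $ds^2=dr^2+h(r)^2d\theta^2$ ($h$ smooth, $h>0$ on $(0,\infty)$) and smooth positive radial density $f(r)=e^{\psi(r)}$; area and length are weighted by $f$. Let $A$ be an isoperimetric region (it minimizes weighted length of boundary among regions of the same weighted area) which is spherically symmetrized: for each $r>0$, $A\cap\{|x|=r\}$ is empty, the whole circle, or a closed arc of that circle symmetric about the ray $\theta=0$. Let $\gamma:[-\beta,\beta]\to\mathbb{R}^2$ be a smooth, counterclockwise, arclength (with respect to $ds$) parametrization of the component of $\partial A$ farthest from the origin, such that $\gamma(0)$ and $\gamma(\beta)=\gamma(-\beta)$ lie on the $x$-axis, $\gamma$ is symmetric about the $x$-axis, lies above the $x$-axis on $(0,\beta)$ and below it on $(-\beta,0)$, and $\gamma(0)$ is a point of $\gamma$ farthest from the origin. Write $\gamma(t)=(r(t),\theta(t))$. Let $\alpha(t)$ be the counterclockwise angle, measured in $ds$, from the unit radial vector $\hat r(t)$ at $\gamma(t)$ to $\gamma'(t)$, chosen continuously in $t$ with $\alpha(0)\in[0,2\pi)$. The generalized curvature $\kappa_f=\kappa+\partial\psi/\partial\nu$ ($\kappa$ the inward geodesic curvature, $\nu$ the outward unit normal) is constant along $\gamma$ since $A$ is isoperimetric, and equals $(\log fh)'(r(t))\sin\alpha(t)+\alpha'(t)$. *)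

theory Defs
  imports "HOL-Analysis.Analysis"
begin

definition smooth_on :: "real set \<Rightarrow> (real \<Rightarrow> 'a::real_normed_vector) \<Rightarrow> bool" where
  "smooth_on S g \<longleftrightarrow>
     (\<exists>D :: nat \<Rightarrow> real \<Rightarrow> 'a. (\<forall>t\<in>S. D 0 t = g t) \<and>
        (\<forall>n. \<forall>t\<in>S. (D n has_vector_derivative D (Suc n) t) (at t within S)))"

end

theory Submission
  imports Defs
begin

text \<open>Along \<gamma> the pair (r, \<alpha>) solves r' = cos \<alpha>, \<alpha>' = \<kappa> - (log f h)'(r) sin \<alpha>. At the
  farthest point r'(0) = 0, so cos \<alpha>(0) = 0, and \<alpha>'(0) = 0 gives \<kappa> = (log f h)'(r 0) sin \<alpha>(0):
  the initial value is a stationary point of this system. The right-hand side is Lipschitz on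
  the compact range of r, so a Gronwall estimate for (r - r 0)^2 + (\<alpha> - \<alpha> 0)^2 shows that r and \<alpha>
  are constant. Then \<theta>' = sin \<alpha>(0) / h (r 0) is a nonzero constant, and since \<gamma> closes up it
  must run through the whole circle of radius r 0.\<close>

lemma has_real_derivative_vector_derivative_smooth_on:
  fixes g :: "real \<Rightarrow> real"
  assumes "smooth_on {a..b} g" "a < b" "t \<in> {a..b}"
  shows "(g has_real_derivative vector_derivative g (at t within {a..b})) (at t within {a..b})"
proof -
  obtain D :: "nat \<Rightarrow> real \<Rightarrow> real" where D0: "\<forall>t\<in>{a..b}. D 0 t = g t"
    and DS: "\<forall>n. \<forall>t\<in>{a..b}. (D n has_vector_derivative D (Suc n) t) (at t within {a..b})"
    using assms(1) unfolding smooth_on_def by blast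
  have "(g has_vector_derivative D 1 t) (at t within {a..b})"
    using has_vector_derivative_transform[of t "{a..b}" g "D 0"] D0 DS assms(3) by simp
  moreover from this have "vector_derivative g (at t within {a..b}) = D 1 t"
    by (rule vector_derivative_within_closed_interval[OF assms(2,3)])
  ultimately show ?thesis by (simp add: has_real_derivative_iff_has_vector_derivative)
qed

lemma smooth_on_interiorE:
  fixes u :: "real \<Rightarrow> real"
  assumes "smooth_on S u"
  obtains D :: "nat \<Rightarrow> real \<Rightarrow> real"
  where "\<And>x. x \<in> S \<Longrightarrow> D 0 x = u x"
    and "\<And>n x. x \<in> interior S \<Longrightarrow> (D n has_real_derivative D (Suc n) x) (at x)"
proof -
  obtain D :: "nat \<Rightarrow> real \<Rightarrow> real" where D0: "\<forall>x\<in>S. D 0 x = u x"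
    and DS: "\<forall>n. \<forall>x\<in>S. (D n has_vector_derivative D (Suc n) x) (at x within S)"
    using assms unfolding smooth_on_def by blast
  have "(D n has_real_derivative D (Suc n) x) (at x)" if "x \<in> interior S" for n x
  proof -
    have "(D n has_vector_derivative D (Suc n) x) (at x within S)"
      using DS that interior_subset by blast
    then show ?thesis
      by (simp add: at_within_interior[OF that] has_real_derivative_iff_has_vector_derivative)
  qed
  with D0 show ?thesis using that by blast
qed

lemma lipschitz_on_deriv_ln_smooth:
  fixes u :: "real \<Rightarrow> real"
  assumes smooth: "smooth_on S u" and sub: "{m..M} \<subseteq> interior S"
    and pos: "\<And>s. s \<in> {m..M} \<Longrightarrow> u s > 0"
  obtains L where "L-lipschitz_on {m..M} (deriv (\<lambda>s. ln (u s)))"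
    and "\<And>x. x \<in> {m..M} \<Longrightarrow>
      ((\<lambda>s. ln (u s)) has_real_derivative deriv (\<lambda>s. ln (u s)) x) (at x)"
proof -
  obtain D :: "nat \<Rightarrow> real \<Rightarrow> real" where D0: "\<And>x. x \<in> S \<Longrightarrow> D 0 x = u x"
    and dD: "\<And>n x. x \<in> interior S \<Longrightarrow> (D n has_real_derivative D (Suc n) x) (at x)"
    using smooth_on_interiorE[OF smooth] by blast
  have x_int: "x \<in> interior S" if "x \<in> {m..M}" for x
    using that sub by blast
  have D0_pos: "D 0 x > 0" if "x \<in> {m..M}" for x
    using D0[OF interior_subset[THEN subsetD, OF x_int[OF that]]] pos[OF that] by simp
  have dlog: "((\<lambda>s. ln (u s)) has_real_derivative D 1 x / D 0 x) (at x)" if x: "x \<in> {m..M}" for x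
  proof (rule has_field_derivative_transform_within_open[OF _ open_interior x_int[OF x]])
    show "((\<lambda>s. ln (D 0 s)) has_real_derivative D 1 x / D 0 x) (at x)"
      using DERIV_chain2[OF DERIV_ln_divide[OF D0_pos[OF x]] dD[OF x_int[OF x], of 0]] by simp
    show "ln (D 0 y) = ln (u y)" if "y \<in> interior S" for y
      using D0[OF interior_subset[THEN subsetD, OF that]] by simp
  qed
  define G' where "G' x = (D 2 x * D 0 x - D 1 x * D 1 x) / (D 0 x * D 0 x)" for x
  have dG: "((\<lambda>x. D 1 x / D 0 x) has_real_derivative G' x) (at x within {m..M})"
    if x: "x \<in> {m..M}" for x
    unfolding G'_def numeral_2_eq_2
    using DERIV_divide[OF dD[OF x_int[OF x], of 1] dD[OF x_int[OF x], of 0]] D0_pos[OF x]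
    by (simp add: has_field_derivative_at_within)
  have "continuous_on {m..M} (D n)" for n
    using dD x_int by (intro continuous_at_imp_continuous_on ballI DERIV_isCont) blast
  then have "continuous_on {m..M} G'"
    unfolding G'_def using D0_pos by (intro continuous_intros) (auto simp: less_le)
  then have "bounded (G' ` {m..M})"
    by (intro compact_imp_bounded compact_continuous_image) auto
  then obtain B where B: "B > 0" "\<And>x. x \<in> {m..M} \<Longrightarrow> \<bar>G' x\<bar> \<le> B"
    by (auto simp: bounded_pos)
  have "B-lipschitz_on {m..M} (\<lambda>x. D 1 x / D 0 x)"
  proof (rule lipschitz_onI)
    fix x y assume "x \<in> {m..M}" "y \<in> {m..M}"
    then show "dist (D 1 x / D 0 x) (D 1 y / D 0 y) \<le> B * dist x y"
      using field_differentiable_bound[OF convex_real_interval(5) dG, of B] B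
      by (simp add: dist_norm)
  qed (use B in simp)
  moreover have deriv_eq: "deriv (\<lambda>s. ln (u s)) x = D 1 x / D 0 x" if "x \<in> {m..M}" for x
    using DERIV_imp_deriv[OF dlog[OF that]] .
  ultimately have "B-lipschitz_on {m..M} (deriv (\<lambda>s. ln (u s)))"
    by (rule lipschitz_on_transform)
  moreover have "((\<lambda>s. ln (u s)) has_real_derivative deriv (\<lambda>s. ln (u s)) x) (at x)"
    if "x \<in> {m..M}" for x
    using dlog[OF that] deriv_eq[OF that] by simp
  ultimately show ?thesis using that by blast
qed

lemma lipschitz_on_Icc_deriv_ln_mult:
  fixes f h :: "real \<Rightarrow> real"
  assumes f: "smooth_on {0..} f" and h: "smooth_on UNIV h"
    and f_pos: "\<And>s. s > 0 \<Longrightarrow> f s > 0" and h_pos: "\<And>s. s > 0 \<Longrightarrow> h s > 0"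
    and "0 < m"
  shows "\<exists>L. L-lipschitz_on {m..M} (deriv (\<lambda>s. ln (f s * h s)))"
proof -
  have pos: "s > 0" if "s \<in> {m..M}" for s
    using that \<open>0 < m\<close> by simp
  have int_f: "{m..M} \<subseteq> interior {0..}" and int_h: "{m..M} \<subseteq> interior UNIV"
    using pos by auto
  obtain Lf where Lf: "Lf-lipschitz_on {m..M} (deriv (\<lambda>s. ln (f s)))"
    and df: "\<And>x. x \<in> {m..M} \<Longrightarrow>
      ((\<lambda>s. ln (f s)) has_real_derivative deriv (\<lambda>s. ln (f s)) x) (at x)"
    using lipschitz_on_deriv_ln_smooth[OF f int_f f_pos[OF pos]] by blast
  obtain Lh where Lh: "Lh-lipschitz_on {m..M} (deriv (\<lambda>s. ln (h s)))"
    and dh: "\<And>x. x \<in> {m..M} \<Longrightarrow>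
      ((\<lambda>s. ln (h s)) has_real_derivative deriv (\<lambda>s. ln (h s)) x) (at x)"
    using lipschitz_on_deriv_ln_smooth[OF h int_h h_pos[OF pos]] by blast
  have "deriv (\<lambda>s. ln (f s * h s)) x = deriv (\<lambda>s. ln (f s)) x + deriv (\<lambda>s. ln (h s)) x"
    if x: "x \<in> {m..M}" for x
  proof (rule DERIV_imp_deriv)
    show "((\<lambda>s. ln (f s * h s)) has_real_derivative
        deriv (\<lambda>s. ln (f s)) x + deriv (\<lambda>s. ln (h s)) x) (at x)"
    proof (rule has_field_derivative_transform_within_open[OF DERIV_add[OF df[OF x] dh[OF x]]])
      show "ln (f s) + ln (h s) = ln (f s * h s)" if "s \<in> {0<..}" for s
        using f_pos[of s] h_pos[of s] that by (simp add: ln_mult)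
    qed (use pos[OF x] in auto)
  qed
  then have "(Lf + Lh)-lipschitz_on {m..M} (deriv (\<lambda>s. ln (f s * h s)))"
    by (rule lipschitz_on_transform[OF lipschitz_on_add[OF Lf Lh]])
  then show ?thesis ..
qed

lemma lipschitz_on_compact_deriv_ln_mult:
  fixes f h :: "real \<Rightarrow> real"
  assumes f: "smooth_on {0..} f" and h: "smooth_on UNIV h"
    and f_pos: "\<And>s. s > 0 \<Longrightarrow> f s > 0" and h_pos: "\<And>s. s > 0 \<Longrightarrow> h s > 0"
    and K: "compact K" "K \<subseteq> {0<..}"
  shows "\<exists>L. L-lipschitz_on K (deriv (\<lambda>s. ln (f s * h s)))"
proof (cases "K = {}")
  case False
  obtain m where m: "m \<in> K" "\<And>y. y \<in> K \<Longrightarrow> m \<le> y"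
    using compact_attains_inf[OF K(1) False] by blast
  obtain M where M: "\<And>y. y \<in> K \<Longrightarrow> y \<le> M"
    using compact_attains_sup[OF K(1) False] by blast
  have "0 < m" using m(1) K(2) by auto
  then obtain L where "L-lipschitz_on {m..M} (deriv (\<lambda>s. ln (f s * h s)))"
    using lipschitz_on_Icc_deriv_ln_mult[OF f h f_pos h_pos] by blast
  moreover have "K \<subseteq> {m..M}" using m(2) M by auto
  ultimately show ?thesis using lipschitz_on_subset by blast
qed auto

lemma DERIV_le_mult_imp_nonpos:
  fixes E E' :: "real \<Rightarrow> real"
  assumes "a \<le> b" and cont: "continuous_on {a..b} E"
    and deriv: "\<And>x. a < x \<Longrightarrow> x < b \<Longrightarrow> (E has_real_derivative E' x) (at x)"
    and le: "\<And>x. a < x \<Longrightarrow> x < b \<Longrightarrow> E' x \<le> C * E x"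
    and "E a \<le> 0"
  shows "E b \<le> 0"
proof -
  define F where "F x = E x * exp (- C * x)" for x
  have "F b \<le> F a"
  proof (rule DERIV_nonpos_imp_decreasing_open[OF \<open>a \<le> b\<close>])
    fix x assume x: "a < x" "x < b"
    have "(F has_real_derivative (E' x - C * E x) * exp (- C * x)) (at x)"
      unfolding F_def using deriv[OF x] by (auto intro!: derivative_eq_intros simp: algebra_simps)
    moreover have "(E' x - C * E x) * exp (- C * x) \<le> 0"
      using le[OF x] by (simp add: mult_nonpos_nonneg)
    ultimately show "\<exists>y. (F has_real_derivative y) (at x) \<and> y \<le> 0" by blast
  qed (unfold F_def, intro continuous_intros cont)
  also have "F a \<le> 0"
    unfolding F_def using \<open>E a \<le> 0\<close> by (simp add: mult_nonpos_nonneg)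
  finally show ?thesis by (simp add: F_def mult_le_0_iff)
qed

lemma DERIV_abs_le_mult_imp_zero:
  fixes E E' :: "real \<Rightarrow> real"
  assumes deriv: "\<And>t. t \<in> {a..b} \<Longrightarrow> (E has_real_derivative E' t) (at t within {a..b})"
    and le: "\<And>t. t \<in> {a..b} \<Longrightarrow> \<bar>E' t\<bar> \<le> C * E t"
    and nonneg: "\<And>t. t \<in> {a..b} \<Longrightarrow> 0 \<le> E t"
    and t0: "t0 \<in> {a..b}" "E t0 = 0" and t: "t \<in> {a..b}"
  shows "E t = 0"
proof -
  have cont: "continuous_on {a..b} E"
    unfolding continuous_on_eq_continuous_within using deriv DERIV_continuous by blast
  have deriv_at: "(E has_real_derivative E' x) (at x)" if "a < x" "x < b" for x
    using deriv[of x] that by (simp add: at_within_Icc_at)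
  consider "t0 \<le> t" | "t \<le> t0" by linarith
  then have "E t \<le> 0"
  proof cases
    case 1
    show ?thesis
    proof (rule DERIV_le_mult_imp_nonpos[OF 1, where C = C])
      show "continuous_on {t0..t} E"
        using cont by (rule continuous_on_subset) (use t0 t in auto)
      fix x assume x: "t0 < x" "x < t"
      show "(E has_real_derivative E' x) (at x)"
        using deriv_at x t0 t by simp
      show "E' x \<le> C * E x"
        using le[of x] x t0 t by (simp add: abs_le_iff)
    qed (use t0 in simp)
  next
    case 2
    have "E (- (- t)) \<le> 0"
    proof (rule DERIV_le_mult_imp_nonpos[of "- t0" "- t" "\<lambda>x. E (- x)" "\<lambda>x. - E' (- x)" C])
      show "continuous_on {- t0..- t} (\<lambda>x. E (- x))"
        using cont t0 t
        by (intro continuous_on_compose2[OF cont] continuous_intros) auto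
      fix x assume x: "- t0 < x" "x < - t"
      show "((\<lambda>x. E (- x)) has_real_derivative - E' (- x)) (at x)"
        using deriv_at[of "- x"] x t0 t by (simp add: DERIV_mirror)
      show "- E' (- x) \<le> C * E (- x)"
        using le[of "- x"] x t0 t by (auto simp: abs_le_iff)
    qed (use 2 t0 in auto)
    then show ?thesis by simp
  qed
  with nonneg[OF t] show ?thesis by simp
qed

lemma abs_sin_minus_sin_le: "\<bar>sin (a::real) - sin b\<bar> \<le> \<bar>a - b\<bar>"
proof -
  have "\<bar>sin a - sin b\<bar> = 2 * \<bar>sin ((a - b) / 2)\<bar> * \<bar>cos ((a + b) / 2)\<bar>"
    by (simp add: sin_diff_sin abs_mult)
  also have "\<dots> \<le> 2 * \<bar>(a - b) / 2\<bar> * 1"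
    by (intro mult_mono abs_sin_x_le_abs_x) auto
  finally show ?thesis by simp
qed

lemma abs_cos_minus_cos_le: "\<bar>cos (a::real) - cos b\<bar> \<le> \<bar>a - b\<bar>"
proof -
  have "\<bar>cos a - cos b\<bar> = 2 * \<bar>sin ((a + b) / 2)\<bar> * \<bar>sin ((b - a) / 2)\<bar>"
    by (simp add: cos_diff_cos abs_mult)
  also have "\<dots> \<le> 2 * 1 * \<bar>(b - a) / 2\<bar>"
    by (intro mult_mono abs_sin_x_le_abs_x) auto
  finally show ?thesis by simp
qed

lemma curvature_ode_stationary:
  fixes r \<alpha> g :: "real \<Rightarrow> real"
  assumes r': "\<And>t. t \<in> {a..b} \<Longrightarrow> (r has_real_derivative cos (\<alpha> t)) (at t within {a..b})"
    and \<alpha>': "\<And>t. t \<in> {a..b} \<Longrightarrow>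
      (\<alpha> has_real_derivative \<kappa> - g (r t) * sin (\<alpha> t)) (at t within {a..b})"
    and lip: "L-lipschitz_on (r ` {a..b}) g"
    and t0: "t0 \<in> {a..b}" and cos0: "cos (\<alpha> t0) = 0" and \<kappa>: "\<kappa> = g (r t0) * sin (\<alpha> t0)"
    and t: "t \<in> {a..b}"
  shows "r t = r t0 \<and> \<alpha> t = \<alpha> t0"
proof -
  define E where "E s = (r s - r t0)\<^sup>2 + (\<alpha> s - \<alpha> t0)\<^sup>2" for s
  define E' where "E' s = 2 * (r s - r t0) * cos (\<alpha> s)
    + 2 * (\<alpha> s - \<alpha> t0) * (\<kappa> - g (r s) * sin (\<alpha> s))" for s
  define C where "C = 1 + L + 2 * \<bar>g (r t0)\<bar>"
  have "E s = 0" if s: "s \<in> {a..b}" for s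
  proof (rule DERIV_abs_le_mult_imp_zero[OF _ _ _ t0 _ s])
    fix s assume s: "s \<in> {a..b}"
    show "(E has_real_derivative E' s) (at s within {a..b})"
      unfolding E_def E'_def using r'[OF s] \<alpha>'[OF s]
      by (auto intro!: derivative_eq_intros simp: algebra_simps)
    define x where "x = \<bar>r s - r t0\<bar>"
    define y where "y = \<bar>\<alpha> s - \<alpha> t0\<bar>"
    have cos_le: "\<bar>cos (\<alpha> s)\<bar> \<le> y"
      using abs_cos_minus_cos_le[of "\<alpha> s" "\<alpha> t0"] cos0 unfolding y_def by simp
    have "\<bar>\<kappa> - g (r s) * sin (\<alpha> s)\<bar>
        = \<bar>g (r t0) * (sin (\<alpha> t0) - sin (\<alpha> s)) + (g (r t0) - g (r s)) * sin (\<alpha> s)\<bar>"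
      unfolding \<kappa> by (simp add: algebra_simps)
    also have "\<dots> \<le> \<bar>g (r t0)\<bar> * \<bar>sin (\<alpha> t0) - sin (\<alpha> s)\<bar> + \<bar>g (r t0) - g (r s)\<bar> * \<bar>sin (\<alpha> s)\<bar>"
      by (metis abs_mult abs_triangle_ineq)
    also have "\<dots> \<le> \<bar>g (r t0)\<bar> * y + L * x * 1"
    proof (intro add_mono mult_mono)
      show "\<bar>sin (\<alpha> t0) - sin (\<alpha> s)\<bar> \<le> y"
        using abs_sin_minus_sin_le[of "\<alpha> t0" "\<alpha> s"] unfolding y_def by (simp add: abs_minus_commute)
      show "\<bar>g (r t0) - g (r s)\<bar> \<le> L * x"
        using lipschitz_onD[OF lip, of "r t0" "r s"] t0 s unfolding x_def
        by (simp add: dist_real_def abs_minus_commute)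
    qed (use lipschitz_on_nonneg[OF lip] in \<open>auto simp: x_def\<close>)
    finally have \<alpha>'_le: "\<bar>\<kappa> - g (r s) * sin (\<alpha> s)\<bar> \<le> \<bar>g (r t0)\<bar> * y + L * x" by simp
    have "\<bar>E' s\<bar> \<le> 2 * x * \<bar>cos (\<alpha> s)\<bar> + 2 * y * \<bar>\<kappa> - g (r s) * sin (\<alpha> s)\<bar>"
      unfolding E'_def x_def y_def by (rule order_trans[OF abs_triangle_ineq]) (simp only: abs_mult abs_numeral order_refl)
    also have "\<dots> \<le> 2 * x * y + 2 * y * (\<bar>g (r t0)\<bar> * y + L * x)"
      by (intro add_mono mult_left_mono cos_le \<alpha>'_le) (auto simp: x_def y_def)
    also have "\<dots> \<le> C * (x\<^sup>2 + y\<^sup>2)"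
    proof -
      have "C * (x\<^sup>2 + y\<^sup>2) - (2 * x * y + 2 * y * (\<bar>g (r t0)\<bar> * y + L * x))
          = (1 + L) * (x - y)\<^sup>2 + 2 * \<bar>g (r t0)\<bar> * x\<^sup>2"
        unfolding C_def by (simp add: algebra_simps power2_eq_square)
      moreover have "0 \<le> (1 + L) * (x - y)\<^sup>2 + 2 * \<bar>g (r t0)\<bar> * x\<^sup>2"
        using lipschitz_on_nonneg[OF lip] by simp
      ultimately show ?thesis by linarith
    qed
    also have "\<dots> = C * E s" unfolding E_def x_def y_def by simp
    finally show "\<bar>E' s\<bar> \<le> C * E s" .
  qed (simp_all add: E_def)
  then show ?thesis
    using t unfolding E_def by (simp add: add_nonneg_eq_0_iff)
qed

lemma pi_le_abs_mult_if_cis_eq: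
  assumes "cis (\<phi> + c * \<beta>) = cis (\<phi> - c * \<beta>)" "c \<noteq> 0" "\<beta> > 0"
  shows "pi \<le> \<bar>c\<bar> * \<beta>"
proof -
  have "cis (2 * c * \<beta>) = 1"
    using assms(1) cis_divide[of "\<phi> + c * \<beta>" "\<phi> - c * \<beta>"] by (simp add: algebra_simps)
  then have "cos (2 * c * \<beta>) = 1" by (metis cis.sel(1) one_complex.simps(1))
  then obtain n :: int where n: "2 * c * \<beta> = real_of_int n * 2 * pi"
    using cos_one_2pi_int by blast
  with assms have "n \<noteq> 0" by auto
  then have "pi \<le> \<bar>real_of_int n\<bar> * pi" by simp
  also have "\<dots> = \<bar>c\<bar> * \<beta>"
  proof -
    have "\<bar>c * \<beta>\<bar> = \<bar>real_of_int n * pi\<bar>" using n by simp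
    then show ?thesis using \<open>\<beta> > 0\<close> by (simp add: abs_mult)
  qed
  finally show ?thesis .
qed

lemma cis_affine_image_eq_sphere:
  assumes "0 \<le> R" "c \<noteq> 0" "pi \<le> \<bar>c\<bar> * \<beta>"
  shows "(\<lambda>t. complex_of_real R * cis (\<phi> + c * t)) ` {-\<beta>..\<beta>} = sphere 0 R"
proof
  show "(\<lambda>t. complex_of_real R * cis (\<phi> + c * t)) ` {-\<beta>..\<beta>} \<subseteq> sphere 0 R"
    using assms(1) by (auto simp: norm_mult)
next
  show "sphere 0 R \<subseteq> (\<lambda>t. complex_of_real R * cis (\<phi> + c * t)) ` {-\<beta>..\<beta>}"
  proof
    fix z :: complex assume "z \<in> sphere 0 R"
    define w where "w = z / cis \<phi>"
    have norm_w: "cmod w = R" using \<open>z \<in> sphere 0 R\<close> by (simp add: w_def norm_divide)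
    define t where "t = Arg w / c"
    have "\<bar>t\<bar> \<le> pi / \<bar>c\<bar>"
      unfolding t_def abs_divide using Arg_bounded[of w] by (intro divide_right_mono) auto
    also have "\<dots> \<le> \<beta>" using assms(2,3) by (simp add: divide_le_eq mult.commute)
    finally have t: "t \<in> {-\<beta>..\<beta>}" by auto
    have "complex_of_real R * cis (\<phi> + c * t) = cis \<phi> * rcis (cmod w) (Arg w)"
      using assms(2) norm_w by (simp add: t_def rcis_def cis_mult[symmetric])
    also have "\<dots> = z" unfolding rcis_cmod_Arg w_def by simp
    finally show "z \<in> (\<lambda>t. complex_of_real R * cis (\<phi> + c * t)) ` {-\<beta>..\<beta>}"
      using t by (metis image_eqI)
  qed
qed

lemma polar_curve_image_eq_sphere:
  fixes \<gamma> :: "real \<Rightarrow> complex" and r \<theta> :: "real \<Rightarrow> real"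
  assumes polar: "\<And>t. t \<in> {-\<beta>..\<beta>} \<Longrightarrow> \<gamma> t = complex_of_real R * cis (\<theta> t)"
    and \<theta>': "\<And>t. t \<in> {-\<beta>..\<beta>} \<Longrightarrow> (\<theta> has_real_derivative c) (at t within {-\<beta>..\<beta>})"
    and closed: "\<gamma> \<beta> = \<gamma> (- \<beta>)" and "R > 0" "c \<noteq> 0" "\<beta> > 0"
  shows "\<gamma> ` {-\<beta>..\<beta>} = sphere 0 R"
proof -
  obtain k where k: "\<And>t. t \<in> {-\<beta>..\<beta>} \<Longrightarrow> \<theta> t - c * t = k"
    using has_field_derivative_zero_constant[of "{-\<beta>..\<beta>}" "\<lambda>t. \<theta> t - c * t"] \<theta>'
    by (force intro!: derivative_eq_intros)
  have \<gamma>_eq: "\<gamma> t = complex_of_real R * cis (k + c * t)" if "t \<in> {-\<beta>..\<beta>}" for t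
    using polar[OF that] k[OF that] by (simp add: algebra_simps)
  have "cis (k + c * \<beta>) = cis (k - c * \<beta>)"
    using closed \<gamma>_eq[of \<beta>] \<gamma>_eq[of "- \<beta>"] \<open>R > 0\<close> \<open>\<beta> > 0\<close> by simp
  then have "pi \<le> \<bar>c\<bar> * \<beta>"
    using pi_le_abs_mult_if_cis_eq \<open>c \<noteq> 0\<close> \<open>\<beta> > 0\<close> by blast
  then have "(\<lambda>t. complex_of_real R * cis (k + c * t)) ` {-\<beta>..\<beta>} = sphere 0 R"
    using cis_affine_image_eq_sphere \<open>R > 0\<close> \<open>c \<noteq> 0\<close> by simp
  moreover have "\<gamma> ` {-\<beta>..\<beta>} = (\<lambda>t. complex_of_real R * cis (k + c * t)) ` {-\<beta>..\<beta>}"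
    using \<gamma>_eq by (rule image_cong[OF refl])
  ultimately show ?thesis by simp
qed

theorem lemma5p1:
  fixes h f :: "real \<Rightarrow> real"
    and \<beta> :: real
    and \<gamma> :: "real \<Rightarrow> complex"
    and r \<theta> \<alpha> :: "real \<Rightarrow> real"
  assumes h_smooth: "smooth_on UNIV h"
    and h_pos: "\<forall>s>0. h s > 0"
    and f_smooth: "smooth_on {0..} f"
    and f_pos: "\<forall>s\<ge>0. f s > 0"
    and \<beta>_pos: "\<beta> > 0"
    and \<gamma>_smooth: "smooth_on {-\<beta>..\<beta>} \<gamma>"
    and polar: "\<forall>t\<in>{-\<beta>..\<beta>}. r t > 0 \<and> \<gamma> t = complex_of_real (r t) * cis (\<theta> t)"
    and r_smooth: "smooth_on {-\<beta>..\<beta>} r"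
    and \<theta>_smooth: "smooth_on {-\<beta>..\<beta>} \<theta>"
    and arclength: "\<forall>t\<in>{-\<beta>..\<beta>}.
        (vector_derivative r (at t within {-\<beta>..\<beta>}))\<^sup>2
        + (h (r t))\<^sup>2 * (vector_derivative \<theta> (at t within {-\<beta>..\<beta>}))\<^sup>2 = 1"
    and symm: "\<forall>t\<in>{-\<beta>..\<beta>}. \<gamma> (- t) = cnj (\<gamma> t)"
    and on_axis: "Im (\<gamma> 0) = 0" "Im (\<gamma> \<beta>) = 0"
    and closed: "\<gamma> \<beta> = \<gamma> (- \<beta>)"
    and above: "\<forall>t\<in>{0<..<\<beta>}. Im (\<gamma> t) > 0"
    and below: "\<forall>t\<in>{-\<beta><..<0}. Im (\<gamma> t) < 0"
    and farthest: "\<forall>t\<in>{-\<beta>..\<beta>}. r t \<le> r 0"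
    and \<alpha>_smooth: "smooth_on {-\<beta>..\<beta>} \<alpha>"
    and \<alpha>_init: "0 \<le> \<alpha> 0" "\<alpha> 0 < 2 * pi"
    and \<alpha>_angle: "\<forall>t\<in>{-\<beta>..\<beta>}.
        cos (\<alpha> t) = vector_derivative r (at t within {-\<beta>..\<beta>}) \<and>
        sin (\<alpha> t) = h (r t) * vector_derivative \<theta> (at t within {-\<beta>..\<beta>})"
    and kappa_const: "\<exists>\<kappa>. \<forall>t\<in>{-\<beta>..\<beta>}.
        deriv (\<lambda>s. ln (f s * h s)) (r t) * sin (\<alpha> t)
        + vector_derivative \<alpha> (at t within {-\<beta>..\<beta>}) = \<kappa>"
    and \<alpha>'_zero: "vector_derivative \<alpha> (at 0 within {-\<beta>..\<beta>}) = 0"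
  shows "\<exists>R>0. \<gamma> ` {-\<beta>..\<beta>} = sphere 0 R"
proof -
  let ?I = "{-\<beta>..\<beta>}"
  define g where "g = deriv (\<lambda>s. ln (f s * h s))"
  have I0: "0 \<in> ?I" and bI: "-\<beta> < \<beta>" using \<beta>_pos by auto
  have r': "(r has_real_derivative cos (\<alpha> t)) (at t within ?I)" if "t \<in> ?I" for t
    using has_real_derivative_vector_derivative_smooth_on[OF r_smooth bI that] \<alpha>_angle that by simp
  obtain \<kappa> where \<kappa>: "\<And>t. t \<in> ?I \<Longrightarrow>
      g (r t) * sin (\<alpha> t) + vector_derivative \<alpha> (at t within ?I) = \<kappa>"
    using kappa_const unfolding g_def by blast
  have \<alpha>': "(\<alpha> has_real_derivative \<kappa> - g (r t) * sin (\<alpha> t)) (at t within ?I)" if "t \<in> ?I" for t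
  proof -
    have "vector_derivative \<alpha> (at t within ?I) = \<kappa> - g (r t) * sin (\<alpha> t)"
      using \<kappa>[OF that] by linarith
    then show ?thesis
      using has_real_derivative_vector_derivative_smooth_on[OF \<alpha>_smooth bI that] by simp
  qed
  have "(r has_real_derivative cos (\<alpha> 0)) (at 0)"
    using r'[OF I0] bI by (simp add: at_within_Icc_at)
  then have cos0: "cos (\<alpha> 0) = 0"
    by (rule DERIV_local_max[where d = \<beta>]) (use farthest \<beta>_pos in \<open>auto simp: abs_less_iff\<close>)
  have "\<kappa> = g (r 0) * sin (\<alpha> 0)" using \<kappa>[OF I0] \<alpha>'_zero by simp
  moreover obtain L where "L-lipschitz_on (r ` ?I) g"
  proof -
    have "continuous_on ?I r"
      using r' DERIV_continuous unfolding continuous_on_eq_continuous_within by blast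
    then have "compact (r ` ?I)" by (rule compact_continuous_image[OF _ compact_Icc])
    moreover have "r ` ?I \<subseteq> {0<..}" using polar by auto
    ultimately show ?thesis
      using lipschitz_on_compact_deriv_ln_mult[OF f_smooth h_smooth] f_pos h_pos that
      unfolding g_def by (meson less_imp_le)
  qed
  ultimately have const: "r t = r 0 \<and> \<alpha> t = \<alpha> 0" if "t \<in> ?I" for t
    using curvature_ode_stationary[OF r' \<alpha>' _ I0 cos0 _ that] by blast
  define c where "c = sin (\<alpha> 0) / h (r 0)"
  have r0: "r 0 > 0" and "h (r 0) > 0" using polar h_pos I0 by auto
  moreover have "sin (\<alpha> 0) \<noteq> 0" using cos0 sin_cos_squared_add[of "\<alpha> 0"] by auto
  ultimately have "c \<noteq> 0" unfolding c_def by simp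
  have "(\<theta> has_real_derivative c) (at t within ?I)" if t: "t \<in> ?I" for t
  proof -
    have "sin (\<alpha> 0) = h (r 0) * vector_derivative \<theta> (at t within ?I)"
      using \<alpha>_angle t const[OF t] by metis
    then have "vector_derivative \<theta> (at t within ?I) = c"
      using \<open>h (r 0) > 0\<close> unfolding c_def by (simp add: field_simps)
    then show ?thesis
      using has_real_derivative_vector_derivative_smooth_on[OF \<theta>_smooth bI t] by simp
  qed
  moreover have "\<gamma> t = complex_of_real (r 0) * cis (\<theta> t)" if "t \<in> ?I" for t
    using polar that const[OF that] by auto
  ultimately have "\<gamma> ` ?I = sphere 0 (r 0)"
    using polar_curve_image_eq_sphere[OF _ _ closed r0 \<open>c \<noteq> 0\<close> \<beta>_pos] by blast
  with r0 show ?thesis by blast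
qed

end
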